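(* Let $H=\sum_{a=1}^m\lambda_aE_a$ be a $k$-local Hamiltonian and $G=\sum_{b=1}^{m'}\kappa_bF_b$ a $k'$-local Hamiltonian. Then, for a universal implied constant, $$\|[H,G]\|_{2,\mathrm{loc}}\lesssim k'k\,\|H\|_{1,\mathrm{loc}}\|G\|_{2,\mathrm{loc}},\qquad \|[H,G]\|_F\lesssim k'k\,\|H\|_{1,\mathrm{loc}}\|G\|_F.$$
   Context: $\mathcal{P}$ denotes the set of $n$-qubit tensor products of Pauli matrices; $\mathrm{supp}(P)$ is the set of qubits on which $P$ acts non-trivially. A $k$-local Hamiltonian is $H=\sum_a\lambda_aE_a$ with real $\lambda_a$ and distinct non-identity Paulis $E_a$ with $|\mathrm{supp}(E_a)|\le k$. For any operator $A=\sum_{X\in\mathcal{P}}\xi_XX$ (Pauli expansion, possibly complex coefficients), $\|A\|_{1,\mathrm{loc}}=\max_{i\in[n]}\sum_{X:\,i\in\mathrm{supp}(X)}|\xi_X|$ and $\|A\|_{2,\mathrm{loc}}=\max_{i\in[n]}\big(\sum_{X:\,i\in\mathrm{supp}(X)}|\xi_X|^2\big)^{1/2}$. $\|\cdot\|_F$ is the Frobenius norm and $\lesssim$ hides a universal constant. *)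

theory Defs
  imports "Jordan_Normal_Form.Matrix"
begin

text \<open>Single-qubit Pauli labels and their 2x2 matrices, with entries indexed by
  (row bit, column bit); True stands for basis state 1.\<close>

datatype pauli = PI | PX | PY | PZ

fun pauli_entry :: "pauli \<Rightarrow> bool \<Rightarrow> bool \<Rightarrow> complex" where
  "pauli_entry PI r c = (if r = c then 1 else 0)"
| "pauli_entry PX r c = (if r = c then 0 else 1)"
| "pauli_entry PY r c = (if r = c then 0 else (if r then \<i> else - \<i>))"
| "pauli_entry PZ r c = (if r = c then (if r then -1 else 1) else 0)"

type_synonym pstring = "nat \<Rightarrow> pauli"

definition paulis :: "nat \<Rightarrow> pstring set" where
  "paulis n = {P. \<forall>i. n \<le> i \<longrightarrow> P i = PI}"

definition supp :: "pstring \<Rightarrow> nat set" where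
  "supp P = {i. P i \<noteq> PI}"

text \<open>Matrix of the tensor product of Pauli matrices, a 2^n x 2^n complex matrix;
  basis index j encodes the computational basis state whose qubit i is bit i of j.\<close>

definition pauli_mat :: "nat \<Rightarrow> pstring \<Rightarrow> complex mat" where
  "pauli_mat n P = mat (2^n) (2^n) (\<lambda>(r, c). \<Prod>i<n. pauli_entry (P i) (bit r i) (bit c i))"

text \<open>A k-local Hamiltonian on n qubits, H = sum_a lambda_a E_a with distinct
  non-identity Paulis E_a of weight at most k, is given by its real coefficient
  function lam on Pauli strings (so the E_a are automatically distinct).\<close>

definition k_local :: "nat \<Rightarrow> nat \<Rightarrow> (pstring \<Rightarrow> real) \<Rightarrow> bool" where
  "k_local n k lam \<longleftrightarrow>
     (\<forall>P. lam P \<noteq> 0 \<longrightarrow> P \<in> paulis n \<and> supp P \<noteq> {} \<and> card (supp P) \<le> k)"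

text \<open>Sum of matrices of a given dimension (JNF has no additive monoid on
  arbitrary-dimension matrices, so we fold with a fixed zero).\<close>

definition msum :: "nat \<Rightarrow> ('b \<Rightarrow> complex mat) \<Rightarrow> 'b set \<Rightarrow> complex mat" where
  "msum d f S = mat d d (\<lambda>(r, c). \<Sum>x\<in>S. f x $$ (r, c))"

definition hamiltonian :: "nat \<Rightarrow> (pstring \<Rightarrow> real) \<Rightarrow> complex mat" where
  "hamiltonian n lam =
     msum (2^n) (\<lambda>P. complex_of_real (lam P) \<cdot>\<^sub>m pauli_mat n P) (paulis n)"

definition mtrace :: "complex mat \<Rightarrow> complex" where
  "mtrace A = (\<Sum>i<dim_row A. A $$ (i, i))"

text \<open>Pauli expansion coefficient xi_X of an n-qubit operator A:
  A = sum_X xi_X X with xi_X = tr(X A) / 2^n (Paulis are Hermitian and orthogonal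
  w.r.t. the Hilbert-Schmidt inner product).\<close>

definition pcoeff :: "nat \<Rightarrow> complex mat \<Rightarrow> pstring \<Rightarrow> complex" where
  "pcoeff n A X = mtrace (pauli_mat n X * A) / 2^n"

definition loc1 :: "nat \<Rightarrow> complex mat \<Rightarrow> real" where
  "loc1 n A = Max (insert 0 ((\<lambda>i. \<Sum>X\<in>{X\<in>paulis n. i \<in> supp X}. cmod (pcoeff n A X)) ` {..<n}))"

definition loc2 :: "nat \<Rightarrow> complex mat \<Rightarrow> real" where
  "loc2 n A = Max (insert 0 ((\<lambda>i. sqrt (\<Sum>X\<in>{X\<in>paulis n. i \<in> supp X}. (cmod (pcoeff n A X))\<^sup>2)) ` {..<n}))"

definition frob :: "complex mat \<Rightarrow> real" where
  "frob A = sqrt (\<Sum>r<dim_row A. \<Sum>c<dim_col A. (cmod (A $$ (r, c)))\<^sup>2)"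

definition commutator :: "complex mat \<Rightarrow> complex mat \<Rightarrow> complex mat" where
  "commutator A B = A * B - B * A"

end

(*
  Expand H and G in the Pauli basis. A product of two Pauli strings is a phase times a Pauli
  string, and two strings commute unless they clash, i.e. act on a common qubit by two different
  non-identity Paulis. Hence [H,G] = sum_X c_X X with

    c_X = sum_P lam_P kap_Q (omega(P,Q) - omega(Q,P)),   Q = P X,

  where only clashing pairs (P,Q) contribute, each with modulus at most 2 |lam_P| |kap_Q|.
  Cauchy-Schwarz with weights |lam_P| gives |c_X|^2 <= 4 (sum' |lam_P|) (sum' |lam_P| kap_Q^2).
  Every contributing P meets supp X, and |supp X| <= k + k', so the first factor is at most
  (k + k') ||H||_1,loc. Summing the second factor over all X, or over the X that contain a fixed
  qubit i (then i lies in supp P or in supp Q), and bounding the inner sums site by site gives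
  ||[H,G]|| <= 2 (k + k') ||H||_1,loc ||G|| for both the Frobenius and the 2,loc norm.
  Finally k + k' <= 2 k k' unless H or G is zero.
*)
theory Submission
  imports Defs "HOL-Analysis.Convex"
begin

section \<open>Finite sums and matrix traces\<close>

lemma sum_lessThan_pow2_Suc:
  "(\<Sum>s<2^Suc n. g s) = (\<Sum>s<2^n. g s) + (\<Sum>s<2^n. g (s + 2^n :: nat))"
proof -
  have "(\<Sum>s<2^Suc n. g s) = (\<Sum>s=0..<2^n. g s) + (\<Sum>s=2^n..<2^n + 2^n. g s)"
    by (simp add: lessThan_atLeast0 sum.atLeastLessThan_concat mult_2)
  also have "(\<Sum>s=2^n..<2^n + 2^n. g s) = (\<Sum>s<2^n. g (s + 2^n))"
    using sum.shift_bounds_nat_ivl[of g 0 "2^n" "2^n"] by (simp add: lessThan_atLeast0)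
  finally show ?thesis by (simp add: lessThan_atLeast0)
qed

lemma bit_add_pow2:
  assumes "s < 2^n" "i \<le> n"
  shows "bit (s + 2^n :: nat) i \<longleftrightarrow> i = n \<or> bit s i"
proof -
  have "\<not> bit s n" using assms(1) by (simp add: bit_iff_odd)
  then have "bit (s + 2^n) i \<longleftrightarrow> bit s i \<or> bit (2^n :: nat) i"
    by (intro bit_disjunctive_add_iff) (auto simp: bit_exp_iff)
  then show ?thesis using \<open>\<not> bit s n\<close> by (auto simp: bit_exp_iff)
qed

lemma sum_prod_bit:
  fixes f :: "nat \<Rightarrow> bool \<Rightarrow> 'a::comm_semiring_1"
  shows "(\<Sum>s<(2::nat)^n. \<Prod>i<n. f i (bit s i)) = (\<Prod>i<n. f i False + f i True)"
proof (induction n)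
  case 0
  then show ?case by simp
next
  case (Suc n)
  have low: "f n (bit s n) = f n False" if "s < 2^n" for s :: nat
    using that by (simp add: bit_iff_odd)
  have high: "(\<Prod>i<n. f i (bit (s + 2^n) i)) * f n (bit (s + 2^n) n) = (\<Prod>i<n. f i (bit s i)) * f n True"
    if "s < 2^n" for s :: nat
  proof -
    have "(\<Prod>i<n. f i (bit (s + 2^n) i)) = (\<Prod>i<n. f i (bit s i))"
      using that by (intro prod.cong) (auto simp: bit_add_pow2)
    then show ?thesis using that by (simp add: bit_add_pow2)
  qed
  have "(\<Sum>s<(2::nat)^Suc n. \<Prod>i<Suc n. f i (bit s i))
      = (\<Sum>s<(2::nat)^n. (\<Prod>i<n. f i (bit s i)) * f n False)
      + (\<Sum>s<(2::nat)^n. (\<Prod>i<n. f i (bit s i)) * f n True)"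
    unfolding sum_lessThan_pow2_Suc by (simp add: low high)
  then show ?case
    by (simp add: Suc distrib_left flip: sum_distrib_right)
qed

lemma weighted_Cauchy_Schwarz:
  fixes w c :: "'a \<Rightarrow> real"
  assumes "\<And>x. x \<in> S \<Longrightarrow> 0 \<le> w x"
  shows "(\<Sum>x\<in>S. w x * c x)\<^sup>2 \<le> (\<Sum>x\<in>S. w x) * (\<Sum>x\<in>S. w x * (c x)\<^sup>2)"
proof -
  have "(\<Sum>x\<in>S. w x * c x) = (\<Sum>x\<in>S. sqrt (w x) * (sqrt (w x) * c x))"
    "(\<Sum>x\<in>S. w x) = (\<Sum>x\<in>S. (sqrt (w x))\<^sup>2)"
    "(\<Sum>x\<in>S. w x * (c x)\<^sup>2) = (\<Sum>x\<in>S. (sqrt (w x) * c x)\<^sup>2)"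
    using assms by (auto intro!: sum.cong simp: power_mult_distrib simp flip: mult.assoc)
  then show ?thesis
    using Cauchy_Schwarz_ineq_sum[of "\<lambda>x. sqrt (w x)" "\<lambda>x. sqrt (w x) * c x" S] by simp
qed

lemma sum_le_card_mult_site_bound:
  fixes a :: "'a \<Rightarrow> real" and sites :: "'a \<Rightarrow> 'b set"
  assumes "finite N" "finite I" "S \<subseteq> N" "\<And>P. P \<in> N \<Longrightarrow> 0 \<le> a P"
    and meets: "\<And>P. P \<in> S \<Longrightarrow> sites P \<inter> I \<noteq> {}"
    and site_bound: "\<And>i. i \<in> I \<Longrightarrow> (\<Sum>P\<in>{P\<in>N. i \<in> sites P}. a P) \<le> B"
  shows "(\<Sum>P\<in>S. a P) \<le> real (card I) * B"
proof -
  have "a P \<le> (\<Sum>i\<in>I. if i \<in> sites P then a P else 0)" if P: "P \<in> S" for P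
  proof -
    obtain i where i: "i \<in> I" "i \<in> sites P" using meets[OF P] by blast
    have "0 \<le> a P" using assms P by blast
    have "a P = (if i \<in> sites P then a P else 0)" using i by simp
    also have "\<dots> \<le> (\<Sum>i\<in>I. if i \<in> sites P then a P else 0)"
      by (rule member_le_sum) (use i \<open>0 \<le> a P\<close> assms(2) in auto)
    finally show ?thesis .
  qed
  then have "(\<Sum>P\<in>S. a P) \<le> (\<Sum>P\<in>S. \<Sum>i\<in>I. if i \<in> sites P then a P else 0)"
    by (rule sum_mono)
  also have "\<dots> \<le> (\<Sum>P\<in>N. \<Sum>i\<in>I. if i \<in> sites P then a P else 0)"
    using assms by (intro sum_mono2 sum_nonneg) auto
  also have "\<dots> = (\<Sum>i\<in>I. \<Sum>P\<in>{P\<in>N. i \<in> sites P}. a P)"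
    by (subst sum.swap) (simp add: sum.inter_filter assms(1))
  also have "\<dots> \<le> real (card I) * B"
    using sum_bounded_above[of I _ B] site_bound by simp
  finally show ?thesis .
qed

lemma two_mult_add_le_four_mult:
  assumes "k \<noteq> 0" "k' \<noteq> 0"
  shows "2 * real (k + k') \<le> 4 * real k' * real k"
proof -
  have "real k \<le> real k' * real k" "real k' \<le> real k' * real k"
    using assms by (simp_all flip: of_nat_mult)
  then show ?thesis
    by (simp add: mult.assoc)
qed

lemma index_mult_mat_sum:
  "dim_col A = dim_row B \<Longrightarrow> r < dim_row A \<Longrightarrow> t < dim_col B \<Longrightarrow>
   (A * B) $$ (r, t) = (\<Sum>s<dim_row B. A $$ (r, s) * B $$ (s, t))"
  by (simp add: scalar_prod_def atLeast0LessThan)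

lemma mtrace_mult:
  assumes "dim_col A = dim_row B" "dim_row A = dim_col B"
  shows "mtrace (A * B) = (\<Sum>r<dim_row A. \<Sum>s<dim_row B. A $$ (r, s) * B $$ (s, r))"
  unfolding mtrace_def
  by (rule sum.cong) (use assms in \<open>simp_all add: index_mult_mat_sum del: index_mult_mat(1)\<close>)

lemma mtrace_mult_commute:
  assumes "dim_col A = dim_row B" "dim_row A = dim_col B"
  shows "mtrace (A * B) = mtrace (B * A)"
  using assms by (simp add: mtrace_mult mult.commute) (rule sum.swap)

lemma mtrace_smult: "dim_col A = dim_row A \<Longrightarrow> mtrace (c \<cdot>\<^sub>m A) = c * mtrace A"
  by (simp add: mtrace_def sum_distrib_left)

section \<open>Pauli matrices and Pauli strings\<close>

(* sigma_p sigma_q = pauli_phase p q * sigma_(pauli_mult p q), see pauli_entry_mult *)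
fun pauli_mult :: "pauli \<Rightarrow> pauli \<Rightarrow> pauli" where
  "pauli_mult PI q = q"
| "pauli_mult p PI = p"
| "pauli_mult PX PY = PZ" | "pauli_mult PY PX = PZ"
| "pauli_mult PY PZ = PX" | "pauli_mult PZ PY = PX"
| "pauli_mult PZ PX = PY" | "pauli_mult PX PZ = PY"
| "pauli_mult _ _ = PI"

fun pauli_phase :: "pauli \<Rightarrow> pauli \<Rightarrow> complex" where
  "pauli_phase PX PY = \<i>" | "pauli_phase PY PX = - \<i>"
| "pauli_phase PY PZ = \<i>" | "pauli_phase PZ PY = - \<i>"
| "pauli_phase PZ PX = \<i>" | "pauli_phase PX PZ = - \<i>"
| "pauli_phase _ _ = 1"

lemma pauli_mult_commute: "pauli_mult p q = pauli_mult q p"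
  by (cases p; cases q) auto

lemma pauli_mult_cancel_left [simp]: "pauli_mult p (pauli_mult p q) = q"
  by (cases p; cases q) auto

lemma pauli_mult_eq_PI_iff: "pauli_mult p q = PI \<longleftrightarrow> p = q"
  by (cases p; cases q) auto

lemma norm_pauli_phase [simp]: "cmod (pauli_phase p q) = 1"
  by (cases p; cases q) auto

lemma pauli_phase_self [simp]: "pauli_phase p p = 1"
  by (cases p) auto

lemma pauli_phase_commute: "p = PI \<or> q = PI \<or> p = q \<Longrightarrow> pauli_phase p q = pauli_phase q p"
  by (cases p; cases q) auto

lemma pauli_entry_mult:
  "pauli_entry p a False * pauli_entry q False c + pauli_entry p a True * pauli_entry q True c
   = pauli_phase p q * pauli_entry (pauli_mult p q) a c"
  by (cases p; cases q; cases a; cases c) auto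

lemma pauli_entry_trace: "pauli_entry p False False + pauli_entry p True True = (if p = PI then 2 else 0)"
  by (cases p) auto

lemma cnj_pauli_entry: "cnj (pauli_entry p r c) = pauli_entry p c r"
  by (cases p; cases r; cases c) auto

lemma UNIV_pauli: "(UNIV :: pauli set) = {PI, PX, PY, PZ}"
  using pauli.exhaust by auto

lemma finite_paulis: "finite (paulis n)"
proof -
  have "paulis n = {P. \<forall>i. (i \<in> {..<n} \<longrightarrow> P i \<in> UNIV) \<and> (i \<notin> {..<n} \<longrightarrow> P i = PI)}"
    by (auto simp: paulis_def)
  then show ?thesis
    using finite_set_of_finite_funs[of "{..<n}" UNIV PI] by (simp add: UNIV_pauli)
qed

lemma paulis_eqI:
  "X \<in> paulis n \<Longrightarrow> Y \<in> paulis n \<Longrightarrow> (\<And>i. i < n \<Longrightarrow> X i = Y i) \<Longrightarrow> X = Y"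
  by (auto simp: paulis_def intro!: ext) (metis not_le)

lemma supp_paulis_less: "X \<in> paulis n \<Longrightarrow> i \<in> supp X \<Longrightarrow> i < n"
  by (auto simp: paulis_def supp_def) (meson not_le)

lemma finite_supp: "X \<in> paulis n \<Longrightarrow> finite (supp X)"
  by (meson finite_lessThan finite_subset lessThan_iff subsetI supp_paulis_less)

definition pstring_mult :: "pstring \<Rightarrow> pstring \<Rightarrow> pstring" where
  "pstring_mult P Q = (\<lambda>i. pauli_mult (P i) (Q i))"

definition pstring_phase :: "nat \<Rightarrow> pstring \<Rightarrow> pstring \<Rightarrow> complex" where
  "pstring_phase n P Q = (\<Prod>i<n. pauli_phase (P i) (Q i))"

definition pstrings_clash :: "pstring \<Rightarrow> pstring \<Rightarrow> bool" where
  "pstrings_clash P Q \<longleftrightarrow> (\<exists>i. P i \<noteq> PI \<and> Q i \<noteq> PI \<and> P i \<noteq> Q i)"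

lemma pstring_mult_in_paulis: "P \<in> paulis n \<Longrightarrow> Q \<in> paulis n \<Longrightarrow> pstring_mult P Q \<in> paulis n"
  by (auto simp: paulis_def pstring_mult_def)

lemma pstring_mult_commute: "pstring_mult P Q = pstring_mult Q P"
  by (simp add: pstring_mult_def pauli_mult_commute)

lemma pstring_mult_cancel_left [simp]: "pstring_mult P (pstring_mult P Q) = Q"
  by (simp add: pstring_mult_def)

lemma pstring_mult_cancel_right [simp]: "pstring_mult (pstring_mult P Q) Q = P"
  by (simp add: pstring_mult_def pauli_mult_commute[of _ "Q _"])

lemma pstring_mult_eq_id_iff: "pstring_mult P Q = (\<lambda>_. PI) \<longleftrightarrow> P = Q"
  by (auto simp: pstring_mult_def pauli_mult_eq_PI_iff fun_eq_iff)

lemma supp_pstring_mult: "supp (pstring_mult P Q) \<subseteq> supp P \<union> supp Q"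
  by (auto simp: supp_def pstring_mult_def)

lemma pstrings_clash_supp:
  "pstrings_clash P Q \<Longrightarrow> \<exists>i. i \<in> supp P \<and> i \<in> supp Q \<and> i \<in> supp (pstring_mult P Q)"
  by (auto simp: pstrings_clash_def supp_def pstring_mult_def pauli_mult_eq_PI_iff)

lemma sum_paulis_filter_reindex_mult:
  "P \<in> paulis n \<Longrightarrow>
   (\<Sum>X\<in>{X\<in>paulis n. p X}. f X) = (\<Sum>Q\<in>{Q\<in>paulis n. p (pstring_mult P Q)}. f (pstring_mult P Q))"
  by (rule sum.reindex_bij_witness[where i="pstring_mult P" and j="pstring_mult P"])
    (auto simp: pstring_mult_in_paulis)

lemma sum_paulis_reindex_mult:
  "P \<in> paulis n \<Longrightarrow> (\<Sum>Q\<in>paulis n. f Q) = (\<Sum>X\<in>paulis n. f (pstring_mult P X))"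
  using sum_paulis_filter_reindex_mult[where p = "\<lambda>_. True"] by simp

lemma sum_supp_pstring_mult_le:
  fixes f :: "pstring \<Rightarrow> real"
  assumes "\<And>Q. 0 \<le> f Q"
  shows "(\<Sum>Q\<in>{Q\<in>paulis n. i \<in> supp (pstring_mult P Q)}. f Q)
         \<le> (\<Sum>Q\<in>{Q\<in>paulis n. i \<in> supp Q}. f Q) + (if i \<in> supp P then \<Sum>Q\<in>paulis n. f Q else 0)"
proof -
  have "(\<Sum>Q\<in>{Q\<in>paulis n. i \<in> supp (pstring_mult P Q)}. f Q)
      \<le> (\<Sum>Q\<in>paulis n. (if i \<in> supp Q then f Q else 0) + (if i \<in> supp P then f Q else 0))"
    unfolding sum.inter_filter[OF finite_paulis]
    using supp_pstring_mult[of P] assms by (intro sum_mono) auto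
  then show ?thesis
    by (cases "i \<in> supp P") (simp_all add: sum.distrib sum.inter_filter[OF finite_paulis])
qed

lemma norm_pstring_phase: "cmod (pstring_phase n P Q) = 1"
  by (simp add: pstring_phase_def prod_norm[symmetric])

lemma pstring_phase_commute: "\<not> pstrings_clash P Q \<Longrightarrow> pstring_phase n P Q = pstring_phase n Q P"
  unfolding pstring_phase_def pstrings_clash_def by (intro prod.cong refl pauli_phase_commute) auto

lemma index_pauli_mat:
  "r < 2^n \<Longrightarrow> c < 2^n \<Longrightarrow> pauli_mat n P $$ (r, c) = (\<Prod>i<n. pauli_entry (P i) (bit r i) (bit c i))"
  by (simp add: pauli_mat_def)

lemma dim_pauli_mat [simp]: "dim_row (pauli_mat n P) = 2^n" "dim_col (pauli_mat n P) = 2^n"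
  by (simp_all add: pauli_mat_def)

lemma pauli_mat_mult:
  "pauli_mat n P * pauli_mat n Q = pstring_phase n P Q \<cdot>\<^sub>m pauli_mat n (pstring_mult P Q)"
  (is "_ = ?R")
proof (rule eq_matI)
  fix r t assume "r < dim_row ?R" "t < dim_col ?R"
  then have r: "r < 2^n" and t: "t < 2^n" by simp_all
  have "(pauli_mat n P * pauli_mat n Q) $$ (r, t)
     = (\<Sum>s<(2::nat)^n. \<Prod>i<n. pauli_entry (P i) (bit r i) (bit s i) * pauli_entry (Q i) (bit s i) (bit t i))"
    using r t by (simp add: index_mult_mat_sum index_pauli_mat prod.distrib del: index_mult_mat(1))
  also have "\<dots> = (\<Prod>i<n. pauli_entry (P i) (bit r i) False * pauli_entry (Q i) False (bit t i)
                        + pauli_entry (P i) (bit r i) True * pauli_entry (Q i) True (bit t i))"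
    by (rule sum_prod_bit)
  also have "\<dots> = ?R $$ (r, t)"
    using r t by (simp add: pauli_entry_mult prod.distrib pstring_phase_def pstring_mult_def index_pauli_mat)
  finally show "(pauli_mat n P * pauli_mat n Q) $$ (r, t) = \<dots>" .
qed simp_all

lemma mtrace_pauli_mat:
  assumes "X \<in> paulis n"
  shows "mtrace (pauli_mat n X) = (if X = (\<lambda>_. PI) then 2^n else 0)"
proof -
  have "mtrace (pauli_mat n X) = (\<Sum>r<(2::nat)^n. \<Prod>i<n. pauli_entry (X i) (bit r i) (bit r i))"
    by (simp add: mtrace_def index_pauli_mat)
  also have "\<dots> = (\<Prod>i<n. if X i = PI then 2 else 0)"
    by (simp add: sum_prod_bit[where f = "\<lambda>i b. pauli_entry (X i) b b"] pauli_entry_trace)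
  also have "\<dots> = (if \<forall>i<n. X i = PI then 2^n else 0)"
    by auto
  also have "(\<forall>i<n. X i = PI) \<longleftrightarrow> X = (\<lambda>_. PI)"
    using assms paulis_eqI[OF assms, of "\<lambda>_. PI"] by (auto simp: paulis_def)
  finally show ?thesis .
qed

lemma mtrace_pauli_mat_mult:
  assumes "X \<in> paulis n" "Y \<in> paulis n"
  shows "mtrace (pauli_mat n X * pauli_mat n Y) = (if X = Y then 2^n else 0)"
  using assms by (simp add: pauli_mat_mult mtrace_smult mtrace_pauli_mat pstring_mult_in_paulis
      pstring_mult_eq_id_iff pstring_phase_def)

section \<open>Linear combinations of Pauli strings\<close>

definition pauli_lincomb :: "nat \<Rightarrow> (pstring \<Rightarrow> complex) \<Rightarrow> complex mat" where
  "pauli_lincomb n c = msum (2^n) (\<lambda>P. c P \<cdot>\<^sub>m pauli_mat n P) (paulis n)"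

lemma hamiltonian_eq_pauli_lincomb: "hamiltonian n lam = pauli_lincomb n (\<lambda>P. complex_of_real (lam P))"
  by (simp add: hamiltonian_def pauli_lincomb_def)

lemma dim_pauli_lincomb [simp]: "dim_row (pauli_lincomb n c) = 2^n" "dim_col (pauli_lincomb n c) = 2^n"
  by (simp_all add: pauli_lincomb_def msum_def)

lemma index_pauli_lincomb:
  "r < 2^n \<Longrightarrow> s < 2^n \<Longrightarrow>
   pauli_lincomb n c $$ (r, s) = (\<Sum>X\<in>paulis n. c X * pauli_mat n X $$ (r, s))"
  by (simp add: pauli_lincomb_def msum_def)

lemma pauli_lincomb_cong:
  "(\<And>X. X \<in> paulis n \<Longrightarrow> a X = b X) \<Longrightarrow> pauli_lincomb n a = pauli_lincomb n b"
  by (simp add: pauli_lincomb_def msum_def cong: sum.cong)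

lemma mtrace_mult_pauli_lincomb:
  assumes "dim_row A = 2^n" "dim_col A = 2^n"
  shows "mtrace (A * pauli_lincomb n c) = (\<Sum>Y\<in>paulis n. c Y * mtrace (A * pauli_mat n Y))"
proof -
  have "mtrace (A * pauli_lincomb n c)
      = (\<Sum>r<2^n. \<Sum>s<2^n. \<Sum>Y\<in>paulis n. c Y * (A $$ (r, s) * pauli_mat n Y $$ (s, r)))"
    using assms by (simp add: mtrace_mult index_pauli_lincomb sum_distrib_left mult_ac)
  also have "\<dots> = (\<Sum>Y\<in>paulis n. c Y * (\<Sum>r<2^n. \<Sum>s<2^n. A $$ (r, s) * pauli_mat n Y $$ (s, r)))"
    by (simp add: sum_distrib_left sum.swap[of _ "paulis n"])
  also have "\<dots> = (\<Sum>Y\<in>paulis n. c Y * mtrace (A * pauli_mat n Y))"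
    using assms by (simp add: mtrace_mult)
  finally show ?thesis .
qed

lemma mtrace_pauli_mat_mult_pauli_lincomb:
  assumes "X \<in> paulis n"
  shows "mtrace (pauli_mat n X * pauli_lincomb n c) = 2^n * c X"
proof -
  have "mtrace (pauli_mat n X * pauli_lincomb n c) = (\<Sum>Y\<in>paulis n. if Y = X then 2^n * c X else 0)"
    using assms by (auto simp: mtrace_mult_pauli_lincomb mtrace_pauli_mat_mult intro: sum.cong)
  then show ?thesis
    using assms finite_paulis by simp
qed

lemma pcoeff_pauli_lincomb: "X \<in> paulis n \<Longrightarrow> pcoeff n (pauli_lincomb n c) X = c X"
  by (simp add: pcoeff_def mtrace_pauli_mat_mult_pauli_lincomb)

lemma cnj_index_pauli_lincomb:
  "r < 2^n \<Longrightarrow> s < 2^n \<Longrightarrow>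
   cnj (pauli_lincomb n c $$ (r, s)) = pauli_lincomb n (\<lambda>X. cnj (c X)) $$ (s, r)"
  by (simp add: index_pauli_lincomb index_pauli_mat cnj_sum cnj_prod cnj_pauli_entry)

lemma frob_pauli_lincomb: "frob (pauli_lincomb n c) = sqrt (2^n * (\<Sum>X\<in>paulis n. (cmod (c X))\<^sup>2))"
proof -
  let ?M = "pauli_lincomb n c" and ?M' = "pauli_lincomb n (\<lambda>X. cnj (c X))"
  have "complex_of_real (\<Sum>r<2^n. \<Sum>s<2^n. (cmod (?M $$ (r, s)))\<^sup>2)
      = (\<Sum>r<2^n. \<Sum>s<2^n. ?M $$ (r, s) * ?M' $$ (s, r))"
    unfolding of_real_sum complex_norm_square by (intro sum.cong refl) (simp add: cnj_index_pauli_lincomb)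
  also have "\<dots> = mtrace (?M * ?M')"
    by (simp add: mtrace_mult)
  also have "\<dots> = (\<Sum>Y\<in>paulis n. cnj (c Y) * mtrace (pauli_mat n Y * ?M))"
    by (simp add: mtrace_mult_pauli_lincomb mtrace_mult_commute[of ?M])
  also have "\<dots> = (\<Sum>Y\<in>paulis n. cnj (c Y) * (2^n * c Y))"
    by (intro sum.cong refl) (simp add: mtrace_pauli_mat_mult_pauli_lincomb)
  also have "\<dots> = complex_of_real (2^n * (\<Sum>X\<in>paulis n. (cmod (c X))\<^sup>2))"
    unfolding of_real_mult of_real_sum complex_norm_square by (simp add: sum_distrib_left mult_ac)
  finally show ?thesis
    by (simp only: of_real_eq_iff frob_def dim_pauli_lincomb)
qed

lemma pauli_lincomb_mult:
  "pauli_lincomb n a * pauli_lincomb n b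
   = pauli_lincomb n (\<lambda>X. \<Sum>P\<in>paulis n. a P * b (pstring_mult P X) * pstring_phase n P (pstring_mult P X))"
  (is "_ = ?R")
proof (rule eq_matI)
  fix r t assume "r < dim_row ?R" "t < dim_col ?R"
  then have r: "r < 2^n" and t: "t < 2^n" by simp_all
  have "(pauli_lincomb n a * pauli_lincomb n b) $$ (r, t)
      = (\<Sum>s<2^n. \<Sum>P\<in>paulis n. \<Sum>Q\<in>paulis n. a P * b Q * (pauli_mat n P $$ (r, s) * pauli_mat n Q $$ (s, t)))"
    using r t by (simp add: index_mult_mat_sum index_pauli_lincomb sum_product mult_ac del: index_mult_mat(1))
  also have "\<dots> = (\<Sum>P\<in>paulis n. \<Sum>Q\<in>paulis n. a P * b Q * (pauli_mat n P * pauli_mat n Q) $$ (r, t))"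
    using r t by (simp add: index_mult_mat_sum sum_distrib_left sum.swap[of _ "{..<2^n}"] del: index_mult_mat(1))
  also have "\<dots> = (\<Sum>P\<in>paulis n. \<Sum>Q\<in>paulis n.
                        a P * b Q * pstring_phase n P Q * pauli_mat n (pstring_mult P Q) $$ (r, t))"
    using r t by (simp add: pauli_mat_mult mult_ac)
  also have "\<dots> = (\<Sum>P\<in>paulis n. \<Sum>X\<in>paulis n.
                        a P * b (pstring_mult P X) * pstring_phase n P (pstring_mult P X) * pauli_mat n X $$ (r, t))"
    by (rule sum.cong[OF refl]) (subst sum_paulis_reindex_mult, assumption, simp)
  also have "\<dots> = ?R $$ (r, t)"
    using r t by (simp add: index_pauli_lincomb sum_distrib_right) (rule sum.swap)
  finally show "(pauli_lincomb n a * pauli_lincomb n b) $$ (r, t) = \<dots>" .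
qed simp_all

lemma pauli_lincomb_diff: "pauli_lincomb n a - pauli_lincomb n b = pauli_lincomb n (\<lambda>X. a X - b X)"
  by (rule eq_matI) (simp_all add: index_pauli_lincomb sum_subtractf algebra_simps)

lemma commutator_pauli_lincomb:
  "commutator (pauli_lincomb n a) (pauli_lincomb n b)
   = pauli_lincomb n (\<lambda>X. \<Sum>P\<in>paulis n. a P * b (pstring_mult P X)
       * (pstring_phase n P (pstring_mult P X) - pstring_phase n (pstring_mult P X) P))"
proof -
  have "(\<Sum>P\<in>paulis n. b P * a (pstring_mult P X) * pstring_phase n P (pstring_mult P X))
      = (\<Sum>P\<in>paulis n. a P * b (pstring_mult P X) * pstring_phase n (pstring_mult P X) P)"
    if "X \<in> paulis n" for X
  proof -
    have "(\<Sum>P\<in>paulis n. b P * a (pstring_mult P X) * pstring_phase n P (pstring_mult P X))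
        = (\<Sum>P\<in>paulis n. b (pstring_mult X P) * a (pstring_mult (pstring_mult X P) X)
            * pstring_phase n (pstring_mult X P) (pstring_mult (pstring_mult X P) X))"
      by (rule sum_paulis_reindex_mult[OF that])
    then show ?thesis
      by (simp add: pstring_mult_commute[of X] mult_ac)
  qed
  then show ?thesis
    unfolding commutator_def pauli_lincomb_mult pauli_lincomb_diff
    by (intro pauli_lincomb_cong) (simp add: sum_subtractf algebra_simps)
qed

lemma loc1_pauli_lincomb:
  "loc1 n (pauli_lincomb n c) = Max (insert 0 ((\<lambda>i. \<Sum>X\<in>{X\<in>paulis n. i \<in> supp X}. cmod (c X)) ` {..<n}))"
proof -
  have "(\<Sum>X\<in>{X\<in>paulis n. i \<in> supp X}. cmod (pcoeff n (pauli_lincomb n c) X))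
      = (\<Sum>X\<in>{X\<in>paulis n. i \<in> supp X}. cmod (c X))" for i
    by (rule sum.cong) (auto simp: pcoeff_pauli_lincomb)
  then show ?thesis by (simp add: loc1_def)
qed

lemma loc2_pauli_lincomb:
  "loc2 n (pauli_lincomb n c)
   = Max (insert 0 ((\<lambda>i. sqrt (\<Sum>X\<in>{X\<in>paulis n. i \<in> supp X}. (cmod (c X))\<^sup>2)) ` {..<n}))"
proof -
  have "(\<Sum>X\<in>{X\<in>paulis n. i \<in> supp X}. (cmod (pcoeff n (pauli_lincomb n c) X))\<^sup>2)
      = (\<Sum>X\<in>{X\<in>paulis n. i \<in> supp X}. (cmod (c X))\<^sup>2)" for i
    by (rule sum.cong) (auto simp: pcoeff_pauli_lincomb)
  then show ?thesis by (simp add: loc2_def)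
qed

lemma loc1_nonneg: "0 \<le> loc1 n A"
  unfolding loc1_def by (rule Max_ge) auto

lemma loc2_nonneg: "0 \<le> loc2 n A"
  unfolding loc2_def by (rule Max_ge) auto

lemma frob_nonneg: "0 \<le> frob A"
  by (simp add: frob_def sum_nonneg)

lemma norms_hamiltonian_k_local_0:
  assumes "k_local n 0 lam"
  shows "loc1 n (hamiltonian n lam) = 0" "loc2 n (hamiltonian n lam) = 0" "frob (hamiltonian n lam) = 0"
proof -
  have "lam = (\<lambda>_. 0)"
  proof (rule ext, rule ccontr)
    fix P assume "lam P \<noteq> 0"
    then have "P \<in> paulis n" "supp P \<noteq> {}" "card (supp P) = 0"
      using assms by (auto simp: k_local_def)
    then show False
      using finite_supp by simp
  qed
  then show "loc1 n (hamiltonian n lam) = 0" "loc2 n (hamiltonian n lam) = 0" "frob (hamiltonian n lam) = 0"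
    by (simp_all add: hamiltonian_eq_pauli_lincomb loc1_pauli_lincomb loc2_pauli_lincomb frob_pauli_lincomb
        image_constant_conv)
qed

section \<open>The commutator of two local Hamiltonians\<close>

locale local_hamiltonian_pair =
  fixes n k k' :: nat and lam kap :: "pstring \<Rightarrow> real"
  assumes lam_local: "k_local n k lam" and kap_local: "k_local n k' kap"
begin

abbreviation "H \<equiv> hamiltonian n lam"
abbreviation "G \<equiv> hamiltonian n kap"

lemma lam_nonzeroD: "lam P \<noteq> 0 \<Longrightarrow> P \<in> paulis n \<and> card (supp P) \<le> k"
  using lam_local by (auto simp: k_local_def)

lemma kap_nonzeroD: "kap Q \<noteq> 0 \<Longrightarrow> Q \<in> paulis n \<and> card (supp Q) \<le> k'"
  using kap_local by (auto simp: k_local_def)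

lemma sum_abs_lam_site_le:
  assumes "i < n"
  shows "(\<Sum>P\<in>{P\<in>paulis n. i \<in> supp P}. \<bar>lam P\<bar>) \<le> loc1 n H"
  unfolding hamiltonian_eq_pauli_lincomb loc1_pauli_lincomb
  by (intro Max_ge insertI2 image_eqI[where x = i]) (simp_all add: assms)

lemma sum_kap_sq_site_le:
  assumes "i < n"
  shows "(\<Sum>Q\<in>{Q\<in>paulis n. i \<in> supp Q}. (kap Q)\<^sup>2) \<le> (loc2 n G)\<^sup>2"
proof -
  have "sqrt (\<Sum>Q\<in>{Q\<in>paulis n. i \<in> supp Q}. (kap Q)\<^sup>2) \<le> loc2 n G"
    unfolding hamiltonian_eq_pauli_lincomb loc2_pauli_lincomb
    by (intro Max_ge insertI2 image_eqI[where x = i]) (simp_all add: assms)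
  then show ?thesis
    by (rule sqrt_le_D)
qed

definition interacting :: "pstring \<Rightarrow> pstring \<Rightarrow> bool" where
  "interacting P Q \<longleftrightarrow> pstrings_clash P Q \<and> lam P \<noteq> 0 \<and> kap Q \<noteq> 0"

lemma sum_abs_lam_interacting_le:
  assumes Q: "Q \<in> paulis n"
  shows "(\<Sum>P\<in>{P\<in>paulis n. interacting P Q}. \<bar>lam P\<bar>) \<le> real k' * loc1 n H"
proof (cases "kap Q = 0")
  case True
  then show ?thesis by (simp add: interacting_def loc1_nonneg)
next
  case False
  have "(\<Sum>P\<in>{P\<in>paulis n. interacting P Q}. \<bar>lam P\<bar>) \<le> real (card (supp Q)) * loc1 n H"
  proof (rule sum_le_card_mult_site_bound[where sites = supp])
    show "supp P \<inter> supp Q \<noteq> {}" if "P \<in> {P\<in>paulis n. interacting P Q}" for P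
      using that by (auto simp: interacting_def dest!: pstrings_clash_supp)
    show "(\<Sum>P\<in>{P\<in>paulis n. i \<in> supp P}. \<bar>lam P\<bar>) \<le> loc1 n H" if "i \<in> supp Q" for i
      using that Q by (intro sum_abs_lam_site_le supp_paulis_less)
  qed (use finite_paulis finite_supp[OF Q] in auto)
  also have "\<dots> \<le> real k' * loc1 n H"
    using kap_nonzeroD[OF False] by (intro mult_right_mono loc1_nonneg) auto
  finally show ?thesis .
qed

lemma sum_kap_sq_interacting_le:
  assumes P: "P \<in> paulis n"
  shows "(\<Sum>Q\<in>{Q\<in>paulis n. interacting P Q}. (kap Q)\<^sup>2) \<le> real k * (loc2 n G)\<^sup>2"
proof (cases "lam P = 0")
  case True
  then show ?thesis by (simp add: interacting_def)
next
  case False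
  have "(\<Sum>Q\<in>{Q\<in>paulis n. interacting P Q}. (kap Q)\<^sup>2) \<le> real (card (supp P)) * (loc2 n G)\<^sup>2"
  proof (rule sum_le_card_mult_site_bound[where sites = supp])
    show "supp Q \<inter> supp P \<noteq> {}" if "Q \<in> {Q\<in>paulis n. interacting P Q}" for Q
      using that by (auto simp: interacting_def dest!: pstrings_clash_supp)
    show "(\<Sum>Q\<in>{Q\<in>paulis n. i \<in> supp Q}. (kap Q)\<^sup>2) \<le> (loc2 n G)\<^sup>2" if "i \<in> supp P" for i
      using that P by (intro sum_kap_sq_site_le supp_paulis_less)
  qed (use finite_paulis finite_supp[OF P] in auto)
  also have "\<dots> \<le> real k * (loc2 n G)\<^sup>2"
    using lam_nonzeroD[OF False] by (intro mult_right_mono) auto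
  finally show ?thesis .
qed

lemma sum_abs_lam_interacting_mult_le:
  assumes X: "X \<in> paulis n"
  shows "(\<Sum>P\<in>{P\<in>paulis n. interacting P (pstring_mult P X)}. \<bar>lam P\<bar>) \<le> real (k + k') * loc1 n H"
proof (cases "{P\<in>paulis n. interacting P (pstring_mult P X)} = {}")
  case True
  show ?thesis unfolding True by (simp add: loc1_nonneg)
next
  case False
  then obtain P0 where P0: "interacting P0 (pstring_mult P0 X)" by auto
  have "supp X \<subseteq> supp P0 \<union> supp (pstring_mult P0 X)"
    using supp_pstring_mult[of P0 "pstring_mult P0 X"] by simp
  then have "card (supp X) \<le> card (supp P0) + card (supp (pstring_mult P0 X))"
    using P0 lam_nonzeroD kap_nonzeroD finite_supp
    by (meson card_Un_le card_mono finite_UnI interacting_def le_trans)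
  also have "\<dots> \<le> k + k'"
    using P0 lam_nonzeroD kap_nonzeroD by (simp add: add_mono interacting_def)
  finally have card_X: "card (supp X) \<le> k + k'" .
  have "(\<Sum>P\<in>{P\<in>paulis n. interacting P (pstring_mult P X)}. \<bar>lam P\<bar>) \<le> real (card (supp X)) * loc1 n H"
  proof (rule sum_le_card_mult_site_bound[where sites = supp])
    show "supp P \<inter> supp X \<noteq> {}" if "P \<in> {P\<in>paulis n. interacting P (pstring_mult P X)}" for P
      using that pstrings_clash_supp[of P "pstring_mult P X"] by (auto simp: interacting_def)
    show "(\<Sum>P\<in>{P\<in>paulis n. i \<in> supp P}. \<bar>lam P\<bar>) \<le> loc1 n H" if "i \<in> supp X" for i
      using that X by (intro sum_abs_lam_site_le supp_paulis_less)
  qed (use finite_paulis finite_supp[OF X] in auto)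
  also have "\<dots> \<le> real (k + k') * loc1 n H"
    using card_X by (intro mult_right_mono loc1_nonneg) auto
  finally show ?thesis .
qed

definition commutator_coeff :: "pstring \<Rightarrow> complex" where
  "commutator_coeff X = (\<Sum>P\<in>paulis n. complex_of_real (lam P) * complex_of_real (kap (pstring_mult P X))
     * (pstring_phase n P (pstring_mult P X) - pstring_phase n (pstring_mult P X) P))"

lemma commutator_eq_pauli_lincomb: "commutator H G = pauli_lincomb n commutator_coeff"
  by (simp add: hamiltonian_eq_pauli_lincomb commutator_pauli_lincomb commutator_coeff_def[abs_def])

lemma norm_commutator_term_le:
  "cmod (complex_of_real (lam P) * complex_of_real (kap Q) * (pstring_phase n P Q - pstring_phase n Q P))
   \<le> (if interacting P Q then 2 * (\<bar>lam P\<bar> * \<bar>kap Q\<bar>) else 0)"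
proof (cases "interacting P Q")
  case True
  have "cmod (pstring_phase n P Q - pstring_phase n Q P) \<le> 2"
    using norm_triangle_ineq4[of "pstring_phase n P Q" "pstring_phase n Q P"] by (simp add: norm_pstring_phase)
  then have "\<bar>lam P\<bar> * \<bar>kap Q\<bar> * cmod (pstring_phase n P Q - pstring_phase n Q P)
      \<le> \<bar>lam P\<bar> * \<bar>kap Q\<bar> * 2"
    by (intro mult_left_mono) auto
  then show ?thesis
    using True by (simp add: norm_mult mult_ac)
next
  case False
  then show ?thesis
    using pstring_phase_commute[of P Q n] by (auto simp: interacting_def)
qed

definition pair_weight :: "pstring \<Rightarrow> pstring \<Rightarrow> real" where
  "pair_weight P Q = (if interacting P Q then \<bar>lam P\<bar> * (kap Q)\<^sup>2 else 0)"

lemma pair_weight_nonneg: "0 \<le> pair_weight P Q"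
  by (simp add: pair_weight_def)

lemma norm_commutator_coeff_sq_le:
  assumes X: "X \<in> paulis n"
  shows "(cmod (commutator_coeff X))\<^sup>2
         \<le> 4 * (real (k + k') * loc1 n H) * (\<Sum>P\<in>paulis n. pair_weight P (pstring_mult P X))"
proof -
  let ?S = "{P\<in>paulis n. interacting P (pstring_mult P X)}"
  define w where "w = (\<Sum>P\<in>?S. \<bar>lam P\<bar> * \<bar>kap (pstring_mult P X)\<bar>)"
  have "cmod (commutator_coeff X)
      \<le> (\<Sum>P\<in>paulis n.
            if interacting P (pstring_mult P X) then 2 * (\<bar>lam P\<bar> * \<bar>kap (pstring_mult P X)\<bar>) else 0)"
    unfolding commutator_coeff_def by (rule order_trans[OF norm_sum sum_mono]) (rule norm_commutator_term_le)
  also have "\<dots> = 2 * w"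
    by (simp add: w_def sum.inter_filter finite_paulis sum_distrib_left if_distrib[of "(*) 2"] cong: if_cong)
  finally have "(cmod (commutator_coeff X))\<^sup>2 \<le> 4 * w\<^sup>2"
    using power_mono[of "cmod (commutator_coeff X)" "2 * w" 2] by (simp add: power_mult_distrib)
  also have "w\<^sup>2 \<le> (\<Sum>P\<in>?S. \<bar>lam P\<bar>) * (\<Sum>P\<in>?S. \<bar>lam P\<bar> * \<bar>kap (pstring_mult P X)\<bar>\<^sup>2)"
    unfolding w_def by (rule weighted_Cauchy_Schwarz) simp
  also have "(\<Sum>P\<in>?S. \<bar>lam P\<bar> * \<bar>kap (pstring_mult P X)\<bar>\<^sup>2)
      = (\<Sum>P\<in>paulis n. pair_weight P (pstring_mult P X))"
    by (simp add: pair_weight_def sum.inter_filter finite_paulis)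
  also have "(\<Sum>P\<in>?S. \<bar>lam P\<bar>) * (\<Sum>P\<in>paulis n. pair_weight P (pstring_mult P X))
      \<le> real (k + k') * loc1 n H * (\<Sum>P\<in>paulis n. pair_weight P (pstring_mult P X))"
    using X by (intro mult_right_mono sum_abs_lam_interacting_mult_le sum_nonneg pair_weight_nonneg)
  finally show ?thesis by simp
qed


lemma sum_pair_weight_reindex:
  "(\<Sum>X\<in>{X\<in>paulis n. p X}. \<Sum>P\<in>paulis n. pair_weight P (pstring_mult P X))
   = (\<Sum>P\<in>paulis n. \<Sum>Q\<in>{Q\<in>paulis n. p (pstring_mult P Q)}. pair_weight P Q)"
proof -
  have "(\<Sum>X\<in>{X\<in>paulis n. p X}. \<Sum>P\<in>paulis n. pair_weight P (pstring_mult P X))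
      = (\<Sum>P\<in>paulis n. \<Sum>X\<in>{X\<in>paulis n. p X}. pair_weight P (pstring_mult P X))"
    by (rule sum.swap)
  also have "\<dots> = (\<Sum>P\<in>paulis n. \<Sum>Q\<in>{Q\<in>paulis n. p (pstring_mult P Q)}. pair_weight P Q)"
    by (rule sum.cong[OF refl]) (subst sum_paulis_filter_reindex_mult, assumption, simp)
  finally show ?thesis .
qed

lemma sum_pair_weight_left_le:
  assumes "Q \<in> paulis n"
  shows "(\<Sum>P\<in>paulis n. pair_weight P Q) \<le> real k' * loc1 n H * (kap Q)\<^sup>2"
proof -
  have "(\<Sum>P\<in>paulis n. pair_weight P Q) = (\<Sum>P\<in>{P\<in>paulis n. interacting P Q}. \<bar>lam P\<bar> * (kap Q)\<^sup>2)"
    by (simp add: pair_weight_def sum.inter_filter finite_paulis)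
  also have "\<dots> = (\<Sum>P\<in>{P\<in>paulis n. interacting P Q}. \<bar>lam P\<bar>) * (kap Q)\<^sup>2"
    by (rule sum_distrib_right[symmetric])
  also have "\<dots> \<le> real k' * loc1 n H * (kap Q)\<^sup>2"
    using assms by (intro mult_right_mono sum_abs_lam_interacting_le) auto
  finally show ?thesis .
qed

lemma sum_pair_weight_right_le:
  assumes "P \<in> paulis n"
  shows "(\<Sum>Q\<in>paulis n. pair_weight P Q) \<le> real k * (loc2 n G)\<^sup>2 * \<bar>lam P\<bar>"
proof -
  have "(\<Sum>Q\<in>paulis n. pair_weight P Q) = (\<Sum>Q\<in>{Q\<in>paulis n. interacting P Q}. (kap Q)\<^sup>2 * \<bar>lam P\<bar>)"
    by (simp add: pair_weight_def sum.inter_filter finite_paulis mult.commute)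
  also have "\<dots> = (\<Sum>Q\<in>{Q\<in>paulis n. interacting P Q}. (kap Q)\<^sup>2) * \<bar>lam P\<bar>"
    by (rule sum_distrib_right[symmetric])
  also have "\<dots> \<le> real k * (loc2 n G)\<^sup>2 * \<bar>lam P\<bar>"
    using assms by (intro mult_right_mono sum_kap_sq_interacting_le) auto
  finally show ?thesis .
qed

lemma sum_pair_weight_le:
  "(\<Sum>X\<in>paulis n. \<Sum>P\<in>paulis n. pair_weight P (pstring_mult P X))
   \<le> real (k + k') * loc1 n H * (\<Sum>Q\<in>paulis n. (kap Q)\<^sup>2)"
proof -
  have "(\<Sum>X\<in>paulis n. \<Sum>P\<in>paulis n. pair_weight P (pstring_mult P X))
      = (\<Sum>P\<in>paulis n. \<Sum>Q\<in>paulis n. pair_weight P Q)"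
    using sum_pair_weight_reindex[of "\<lambda>_. True"] by simp
  also have "\<dots> = (\<Sum>Q\<in>paulis n. \<Sum>P\<in>paulis n. pair_weight P Q)"
    by (rule sum.swap)
  also have "\<dots> \<le> (\<Sum>Q\<in>paulis n. real k' * loc1 n H * (kap Q)\<^sup>2)"
    by (intro sum_mono sum_pair_weight_left_le)
  also have "\<dots> \<le> (\<Sum>Q\<in>paulis n. real (k + k') * loc1 n H * (kap Q)\<^sup>2)"
    by (intro sum_mono mult_right_mono) (auto simp: loc1_nonneg)
  finally show ?thesis
    by (simp add: sum_distrib_left)
qed

lemma sum_pair_weight_site_le:
  assumes i: "i < n"
  shows "(\<Sum>X\<in>{X\<in>paulis n. i \<in> supp X}. \<Sum>P\<in>paulis n. pair_weight P (pstring_mult P X))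
         \<le> real (k + k') * loc1 n H * (loc2 n G)\<^sup>2"
proof -
  let ?w = pair_weight
  have "(\<Sum>X\<in>{X\<in>paulis n. i \<in> supp X}. \<Sum>P\<in>paulis n. ?w P (pstring_mult P X))
      \<le> (\<Sum>P\<in>paulis n. (\<Sum>Q\<in>{Q\<in>paulis n. i \<in> supp Q}. ?w P Q)
                         + (if i \<in> supp P then \<Sum>Q\<in>paulis n. ?w P Q else 0))"
    unfolding sum_pair_weight_reindex by (intro sum_mono sum_supp_pstring_mult_le pair_weight_nonneg)
  also have "\<dots> = (\<Sum>P\<in>paulis n. \<Sum>Q\<in>{Q\<in>paulis n. i \<in> supp Q}. ?w P Q)
                + (\<Sum>P\<in>{P\<in>paulis n. i \<in> supp P}. \<Sum>Q\<in>paulis n. ?w P Q)"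
    by (simp add: sum.distrib sum.inter_filter finite_paulis)
  also have "(\<Sum>P\<in>paulis n. \<Sum>Q\<in>{Q\<in>paulis n. i \<in> supp Q}. ?w P Q)
      = (\<Sum>Q\<in>{Q\<in>paulis n. i \<in> supp Q}. \<Sum>P\<in>paulis n. ?w P Q)"
    by (rule sum.swap)
  also have "\<dots> \<le> (\<Sum>Q\<in>{Q\<in>paulis n. i \<in> supp Q}. real k' * loc1 n H * (kap Q)\<^sup>2)"
    by (intro sum_mono sum_pair_weight_left_le) auto
  also have "\<dots> \<le> real k' * loc1 n H * (loc2 n G)\<^sup>2"
    unfolding sum_distrib_left[symmetric]
    using i by (intro mult_left_mono sum_kap_sq_site_le mult_nonneg_nonneg loc1_nonneg) simp_all
  also have "(\<Sum>P\<in>{P\<in>paulis n. i \<in> supp P}. \<Sum>Q\<in>paulis n. ?w P Q)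
      \<le> (\<Sum>P\<in>{P\<in>paulis n. i \<in> supp P}. real k * (loc2 n G)\<^sup>2 * \<bar>lam P\<bar>)"
    by (intro sum_mono sum_pair_weight_right_le) auto
  also have "\<dots> \<le> real k * (loc2 n G)\<^sup>2 * loc1 n H"
    unfolding sum_distrib_left[symmetric]
    using i by (intro mult_left_mono sum_abs_lam_site_le mult_nonneg_nonneg) simp_all
  finally show ?thesis
    by (simp add: algebra_simps)
qed

theorem loc2_commutator_le: "loc2 n (commutator H G) \<le> 2 * real (k + k') * loc1 n H * loc2 n G"
proof -
  let ?c = "real (k + k') * loc1 n H" and ?B = "2 * real (k + k') * loc1 n H * loc2 n G"
  have c_nonneg: "0 \<le> ?c"
    by (intro mult_nonneg_nonneg loc1_nonneg) simp
  have "sqrt (\<Sum>X\<in>{X\<in>paulis n. i \<in> supp X}. (cmod (commutator_coeff X))\<^sup>2) \<le> ?B" if "i < n" for i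
  proof (rule real_le_lsqrt)
    show "0 \<le> ?B"
      by (intro mult_nonneg_nonneg loc1_nonneg loc2_nonneg) simp_all
    have "(\<Sum>X\<in>{X\<in>paulis n. i \<in> supp X}. (cmod (commutator_coeff X))\<^sup>2)
        \<le> (\<Sum>X\<in>{X\<in>paulis n. i \<in> supp X}. 4 * ?c * (\<Sum>P\<in>paulis n. pair_weight P (pstring_mult P X)))"
      by (intro sum_mono norm_commutator_coeff_sq_le) auto
    also have "\<dots>
        = 4 * ?c * (\<Sum>X\<in>{X\<in>paulis n. i \<in> supp X}. \<Sum>P\<in>paulis n. pair_weight P (pstring_mult P X))"
      by (simp add: sum_distrib_left)
    also have "\<dots> \<le> 4 * ?c * (?c * (loc2 n G)\<^sup>2)"
      using c_nonneg by (intro mult_left_mono sum_pair_weight_site_le that) simp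
    also have "\<dots> = ?B\<^sup>2"
      by (simp add: power2_eq_square mult_ac del: of_nat_add)
    finally show "(\<Sum>X\<in>{X\<in>paulis n. i \<in> supp X}. (cmod (commutator_coeff X))\<^sup>2) \<le> ?B\<^sup>2" .
  qed
  moreover have "0 \<le> ?B"
    by (intro mult_nonneg_nonneg loc1_nonneg loc2_nonneg) simp_all
  ultimately show ?thesis
    unfolding commutator_eq_pauli_lincomb loc2_pauli_lincomb by (subst Max_le_iff) auto
qed

theorem frob_commutator_le: "frob (commutator H G) \<le> 2 * real (k + k') * loc1 n H * frob G"
proof -
  let ?c = "real (k + k') * loc1 n H" and ?S = "\<Sum>Q\<in>paulis n. (kap Q)\<^sup>2"
  have c_nonneg: "0 \<le> ?c"
    by (intro mult_nonneg_nonneg loc1_nonneg) simp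
  have "(\<Sum>X\<in>paulis n. (cmod (commutator_coeff X))\<^sup>2)
      \<le> (\<Sum>X\<in>paulis n. 4 * ?c * (\<Sum>P\<in>paulis n. pair_weight P (pstring_mult P X)))"
    by (intro sum_mono norm_commutator_coeff_sq_le)
  also have "\<dots> = 4 * ?c * (\<Sum>X\<in>paulis n. \<Sum>P\<in>paulis n. pair_weight P (pstring_mult P X))"
    by (simp add: sum_distrib_left)
  also have "\<dots> \<le> 4 * ?c * (?c * ?S)"
    using c_nonneg by (intro mult_left_mono sum_pair_weight_le) simp
  finally have coeffs: "(\<Sum>X\<in>paulis n. (cmod (commutator_coeff X))\<^sup>2) \<le> 4 * ?c * (?c * ?S)" .
  have "frob (commutator H G) = sqrt (2^n * (\<Sum>X\<in>paulis n. (cmod (commutator_coeff X))\<^sup>2))"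
    by (simp add: commutator_eq_pauli_lincomb frob_pauli_lincomb)
  also have "\<dots> \<le> sqrt (2^n * (4 * ?c * (?c * ?S)))"
    using coeffs by simp
  also have "\<dots> = sqrt ((2 * ?c)\<^sup>2 * (2^n * ?S))"
    by (simp add: power2_eq_square mult_ac del: of_nat_add)
  also have "\<dots> = 2 * ?c * frob G"
    using c_nonneg by (simp add: real_sqrt_mult hamiltonian_eq_pauli_lincomb frob_pauli_lincomb del: of_nat_add)
  finally show ?thesis
    by (simp add: mult_ac del: of_nat_add)
qed

theorem commutator_norms_le:
  "loc2 n (commutator H G) \<le> 4 * real k' * real k * loc1 n H * loc2 n G
   \<and> frob (commutator H G) \<le> 4 * real k' * real k * loc1 n H * frob G"
proof (cases "k = 0 \<or> k' = 0")
  case True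
  \<comment> \<open>then k + k' \<le> 2 k k' fails, but H or G vanishes\<close>
  then have "loc1 n H = 0 \<or> loc2 n G = 0 \<and> frob G = 0"
    using norms_hamiltonian_k_local_0 lam_local kap_local by auto
  then show ?thesis
    using loc2_commutator_le frob_commutator_le True by auto
next
  case False
  then have "2 * real (k + k') \<le> 4 * real k' * real k"
    by (intro two_mult_add_le_four_mult) auto
  then have scale: "2 * real (k + k') * loc1 n H * y \<le> 4 * real k' * real k * loc1 n H * y" if "0 \<le> y" for y
    using that loc1_nonneg by (intro mult_right_mono) simp_all
  show ?thesis
    using order_trans[OF loc2_commutator_le scale[OF loc2_nonneg]]
      order_trans[OF frob_commutator_le scale[OF frob_nonneg]] by simp
qed

end

theorem lemma3p9:
  "\<exists>C>0. \<forall>(n::nat) (k::nat) (k'::nat) (lam::pstring \<Rightarrow> real) (kap::pstring \<Rightarrow> real).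
     k_local n k lam \<longrightarrow> k_local n k' kap \<longrightarrow>
       (let H = hamiltonian n lam; G = hamiltonian n kap; HG = commutator H G in
          loc2 n HG \<le> C * real k' * real k * loc1 n H * loc2 n G
        \<and> frob HG \<le> C * real k' * real k * loc1 n H * frob G)"
proof (intro exI[of _ 4] conjI allI impI)
  fix n k k' :: nat and lam kap :: "pstring \<Rightarrow> real"
  assume "k_local n k lam" "k_local n k' kap"
  then interpret local_hamiltonian_pair n k k' lam kap
    by unfold_locales
  show "let H = hamiltonian n lam; G = hamiltonian n kap; HG = commutator H G in
          loc2 n HG \<le> 4 * real k' * real k * loc1 n H * loc2 n G
        \<and> frob HG \<le> 4 * real k' * real k * loc1 n H * frob G"
    unfolding Let_def by (rule commutator_norms_le)
qed simp

end
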